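(* Let $k$ be a field and $(A,(I_i^\pm)_{i=1,\ldots,n})$ a good $n$-fold cubical algebra over $k$. Put $A':=I_1^0$ and $J_{i-1}^\pm:=I_i^\pm\cap I_1^0$ for $i=2,\ldots,n$. (1) Then $(A',(J_i^\pm)_{i=1,\ldots,n-1})$ is a good $(n-1)$-fold cubical algebra, and $A'$ and $A$ have the same trace-class operators. (2) The natural homomorphism $I_{tr}/[I_{tr},I_{tr}]\to I_{tr}/[I_{tr},A]$ is an isomorphism.
   Context: Algebras are associative but not necessarily unital; algebra morphisms need not preserve units. A Beilinson $n$-fold cubical algebra over $k$ is an associative $k$-algebra $A$ together with two-sided ideals $I_i^+,I_i^-$ ($i=1,\ldots,n$) such that $I_i^++I_i^-=A$ for each $i$; one sets $I_i^0:=I_i^+\cap I_i^-$ and $I_{tr}:=\bigcap_{i=1}^nI_i^0$ (the trace-class operators). An algebra $B$ is locally left (resp. right) unital if for every finite subset $S\subseteq B$ there is $e_S\in B$ with $e_Sa=a$ (resp. $ae_S=a$) for all $a\in S$; locally bi-unital if both hold. The cubical algebra is good if for every $c=1,\ldots,n$ the intersection $I_1^0\cap\cdots\cap I_c^0$ is locally bi-unital. $[X,Y]$ denotes the $k$-span of commutators $xy-yx$. *)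

theory Defs
  imports Complex_Main
begin

(* An associative, not necessarily unital k-algebra structure on the ambient ring type 'a,
   with scalar multiplication sc by the field 'k. *)
definition kalg :: "('k::field \<Rightarrow> 'a::ring \<Rightarrow> 'a) \<Rightarrow> bool" where
  "kalg sc \<longleftrightarrow> module sc \<and>
     (\<forall>c x y. sc c (x * y) = sc c x * y \<and> sc c (x * y) = x * sc c y)"

definition subalg :: "('k::field \<Rightarrow> 'a::ring \<Rightarrow> 'a) \<Rightarrow> 'a set \<Rightarrow> bool" where
  "subalg sc A \<longleftrightarrow> module.subspace sc A \<and> (\<forall>x\<in>A. \<forall>y\<in>A. x * y \<in> A)"

definition ideal2 :: "('k::field \<Rightarrow> 'a::ring \<Rightarrow> 'a) \<Rightarrow> 'a set \<Rightarrow> 'a set \<Rightarrow> bool" where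
  "ideal2 sc A I \<longleftrightarrow> module.subspace sc I \<and> I \<subseteq> A \<and>
     (\<forall>a\<in>A. \<forall>x\<in>I. a * x \<in> I \<and> x * a \<in> I)"

definition setsum :: "'a::plus set \<Rightarrow> 'a set \<Rightarrow> 'a set" where
  "setsum X Y = {x + y | x y. x \<in> X \<and> y \<in> Y}"

definition cubical :: "('k::field \<Rightarrow> 'a::ring \<Rightarrow> 'a) \<Rightarrow> 'a set \<Rightarrow> (nat \<Rightarrow> 'a set) \<Rightarrow> (nat \<Rightarrow> 'a set) \<Rightarrow> nat \<Rightarrow> bool" where
  "cubical sc A Ipl Imi n \<longleftrightarrow> subalg sc A \<and>
     (\<forall>i\<in>{1..n}. ideal2 sc A (Ipl i) \<and> ideal2 sc A (Imi i) \<and> setsum (Ipl i) (Imi i) = A)"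

definition I0 :: "(nat \<Rightarrow> 'a set) \<Rightarrow> (nat \<Rightarrow> 'a set) \<Rightarrow> nat \<Rightarrow> 'a set" where
  "I0 Ipl Imi i = Ipl i \<inter> Imi i"

(* trace-class operators: intersection of I_i^0, i=1..n (equals A when n = 0) *)
definition Itr :: "'a set \<Rightarrow> (nat \<Rightarrow> 'a set) \<Rightarrow> (nat \<Rightarrow> 'a set) \<Rightarrow> nat \<Rightarrow> 'a set" where
  "Itr A Ipl Imi n = A \<inter> (\<Inter>i\<in>{1..n}. I0 Ipl Imi i)"

definition loc_left_unital :: "'a::times set \<Rightarrow> bool" where
  "loc_left_unital B \<longleftrightarrow> (\<forall>S. finite S \<and> S \<subseteq> B \<longrightarrow> (\<exists>e\<in>B. \<forall>a\<in>S. e * a = a))"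

definition loc_right_unital :: "'a::times set \<Rightarrow> bool" where
  "loc_right_unital B \<longleftrightarrow> (\<forall>S. finite S \<and> S \<subseteq> B \<longrightarrow> (\<exists>e\<in>B. \<forall>a\<in>S. a * e = a))"

definition loc_biunital :: "'a::times set \<Rightarrow> bool" where
  "loc_biunital B \<longleftrightarrow> loc_left_unital B \<and> loc_right_unital B"

definition good_cubical :: "('k::field \<Rightarrow> 'a::ring \<Rightarrow> 'a) \<Rightarrow> 'a set \<Rightarrow> (nat \<Rightarrow> 'a set) \<Rightarrow> (nat \<Rightarrow> 'a set) \<Rightarrow> nat \<Rightarrow> bool" where
  "good_cubical sc A Ipl Imi n \<longleftrightarrow> cubical sc A Ipl Imi n \<and>
     (\<forall>c\<in>{1..n}. loc_biunital (\<Inter>i\<in>{1..c}. I0 Ipl Imi i))"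

definition comm_span :: "('k::field \<Rightarrow> 'a::ring \<Rightarrow> 'a) \<Rightarrow> 'a set \<Rightarrow> 'a set \<Rightarrow> 'a set" where
  "comm_span sc X Y = module.span sc {x * y - y * x | x y. x \<in> X \<and> y \<in> Y}"

definition quot :: "'a::plus set \<Rightarrow> 'a set \<Rightarrow> 'a set set" where
  "quot X N = {{x + m | m. m \<in> N} | x. x \<in> X}"

(* natural map X/N1 -> X/N2 (for N1 \<subseteq> N2): the coset C goes to C + N2 *)
definition nat_map :: "'a::plus set \<Rightarrow> 'a set \<Rightarrow> 'a set" where
  "nat_map N2 C = setsum C N2"

end

theory Submission
  imports Defs
begin

text \<open>Part (1): an element a of a locally left unital ideal B has a local unit e = p + m
  with p in I+, m in I-, so a = p a + m a splits into I+ \<inter> B and I- \<inter> B; the face algebra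
  therefore again satisfies the cubical axioms, and its goodness conditions are those of A
  shifted by one index. Part (2): if T is a locally right unital ideal of A and f is a right
  unit for t, then t a - a t = [t, f a] - [a t, f] with f a, a t \<in> T, so [T, A] = [T, T].\<close>

lemma ideal2_subalg:
  assumes "ideal2 sc A I"
  shows "subalg sc I"
  using assms unfolding ideal2_def subalg_def by blast

lemma ideal2_Int:
  assumes "module sc" "ideal2 sc A I" "ideal2 sc A J"
  shows "ideal2 sc A (I \<inter> J)"
  using assms unfolding ideal2_def by (auto intro: module.subspace_inter)

lemma ideal2_INT:
  assumes "module sc" "K \<noteq> {}" "\<And>i. i \<in> K \<Longrightarrow> ideal2 sc A (F i)"
  shows "ideal2 sc A (\<Inter>i\<in>K. F i)"
proof -
  have "module.subspace sc (\<Inter>(F ` K))"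
    using assms by (auto intro: module.subspace_Inter simp: ideal2_def)
  then show ?thesis using assms unfolding ideal2_def by blast
qed

lemma ideal2_restrict:
  assumes "module sc" "ideal2 sc A I" "subalg sc B" "B \<subseteq> A"
  shows "ideal2 sc B (I \<inter> B)"
  using assms unfolding ideal2_def subalg_def by (auto intro: module.subspace_inter)

lemma loc_left_unitalE:
  assumes "loc_left_unital B" "a \<in> B"
  obtains e where "e \<in> B" "e * a = a"
  using assms unfolding loc_left_unital_def by (metis empty_subsetI finite.simps insert_iff insert_subset)

lemma loc_right_unitalE:
  assumes "loc_right_unital B" "a \<in> B"
  obtains e where "e \<in> B" "a * e = a"
  using assms unfolding loc_right_unital_def by (metis empty_subsetI finite.simps insert_iff insert_subset)

lemma setsum_Int_loc_left_unital:
  fixes B :: "'a::ring set"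
  assumes "module sc" and sum: "setsum P M = A"
    and P: "ideal2 sc A P" and M: "ideal2 sc A M"
    and B: "ideal2 sc A B" and unital: "loc_left_unital B"
  shows "setsum (P \<inter> B) (M \<inter> B) = B"
proof
  show "setsum (P \<inter> B) (M \<inter> B) \<subseteq> B"
    using B \<open>module sc\<close> unfolding setsum_def ideal2_def by (auto intro: module.subspace_add)
  show "B \<subseteq> setsum (P \<inter> B) (M \<inter> B)"
  proof
    fix a assume a: "a \<in> B"
    obtain e where e: "e \<in> B" "e * a = a" using loc_left_unitalE[OF unital a] .
    with B sum obtain p m where pm: "p \<in> P" "m \<in> M" "e = p + m"
      unfolding ideal2_def setsum_def by blast
    have "p * a \<in> P \<inter> B" "m * a \<in> M \<inter> B"
      using pm a P M B unfolding ideal2_def by (auto simp: subset_iff)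
    moreover have "a = p * a + m * a" using e pm by (simp add: distrib_right)
    ultimately show "a \<in> setsum (P \<inter> B) (M \<inter> B)" unfolding setsum_def by blast
  qed
qed

lemma INT_shift_first:
  fixes f :: "nat \<Rightarrow> 'a set"
  shows "f 1 \<inter> (\<Inter>i\<in>{1..c}. f (i + 1) \<inter> f 1) = (\<Inter>i\<in>{1..c + 1}. f i)"
proof -
  have "{1..c + 1} = insert 1 ((\<lambda>i. i + 1) ` {1..c})"
    by auto
  then show ?thesis by (simp only: INT_insert image_image) blast
qed

lemma INT_shift:
  fixes f :: "nat \<Rightarrow> 'a set"
  assumes "c \<ge> 1"
  shows "(\<Inter>i\<in>{1..c}. f (i + 1) \<inter> f 1) = (\<Inter>i\<in>{1..c + 1}. f i)"
proof -
  have "(\<Inter>i\<in>{1..c}. f (i + 1) \<inter> f 1) \<subseteq> f 1" using assms by auto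
  then show ?thesis using INT_shift_first[of f c] by blast
qed

lemma I0_face:
  "I0 (\<lambda>j. Ipl (j + 1) \<inter> I0 Ipl Imi 1) (\<lambda>j. Imi (j + 1) \<inter> I0 Ipl Imi 1) i
     = I0 Ipl Imi (i + 1) \<inter> I0 Ipl Imi 1"
  unfolding I0_def by auto

lemma cubical_I0:
  assumes "module sc" "cubical sc A Ipl Imi n" "i \<in> {1..n}"
  shows "ideal2 sc A (I0 Ipl Imi i)"
  using assms unfolding cubical_def I0_def by (auto intro: ideal2_Int)

lemma good_cubical_face:
  assumes "module sc" "n \<ge> 1" and good: "good_cubical sc A Ipl Imi n"
  shows "good_cubical sc (I0 Ipl Imi 1)
           (\<lambda>j. Ipl (j + 1) \<inter> I0 Ipl Imi 1) (\<lambda>j. Imi (j + 1) \<inter> I0 Ipl Imi 1) (n - 1)"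
proof -
  have cub: "cubical sc A Ipl Imi n"
    and loc: "\<And>c. c \<in> {1..n} \<Longrightarrow> loc_biunital (\<Inter>i\<in>{1..c}. I0 Ipl Imi i)"
    using good unfolding good_cubical_def by auto
  let ?A' = "I0 Ipl Imi 1"
  have A': "ideal2 sc A ?A'" using cubical_I0[OF assms(1) cub] assms(2) by simp
  have A'_unital: "loc_left_unital ?A'" using loc[of 1] assms(2) by (simp add: loc_biunital_def)
  have "cubical sc ?A' (\<lambda>j. Ipl (j + 1) \<inter> ?A') (\<lambda>j. Imi (j + 1) \<inter> ?A') (n - 1)"
    unfolding cubical_def
  proof (intro conjI ballI)
    show "subalg sc ?A'" using A' by (rule ideal2_subalg)
    fix i assume "i \<in> {1..n - 1}"
    then have i: "i + 1 \<in> {1..n}" by auto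
    have P: "ideal2 sc A (Ipl (i + 1))" and M: "ideal2 sc A (Imi (i + 1))"
      and sum: "setsum (Ipl (i + 1)) (Imi (i + 1)) = A"
      using cub i unfolding cubical_def by auto
    have "ideal2 sc A ?A'" "?A' \<subseteq> A" using A' unfolding ideal2_def by auto
    then show "ideal2 sc ?A' (Ipl (i + 1) \<inter> ?A')" "ideal2 sc ?A' (Imi (i + 1) \<inter> ?A')"
      using P M assms(1) by (auto intro: ideal2_restrict ideal2_subalg)
    show "setsum (Ipl (i + 1) \<inter> ?A') (Imi (i + 1) \<inter> ?A') = ?A'"
      using setsum_Int_loc_left_unital[OF assms(1) sum P M A' A'_unital] .
  qed
  moreover have "loc_biunital (\<Inter>i\<in>{1..c}. I0 Ipl Imi (i + 1) \<inter> I0 Ipl Imi 1)"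
    if "c \<in> {1..n - 1}" for c
    using loc[of "c + 1"] that INT_shift[of c "I0 Ipl Imi"] by auto
  ultimately show ?thesis unfolding good_cubical_def I0_face by blast
qed

lemma Itr_eq_INT:
  assumes "n \<ge> 1" "I0 Ipl Imi 1 \<subseteq> A"
  shows "Itr A Ipl Imi n = (\<Inter>i\<in>{1..n}. I0 Ipl Imi i)"
proof -
  have "(\<Inter>i\<in>{1..n}. I0 Ipl Imi i) \<subseteq> I0 Ipl Imi 1" using assms(1) by (intro INT_lower) simp
  then show ?thesis using assms(2) unfolding Itr_def by blast
qed

lemma Itr_face:
  assumes "n \<ge> 1"
  shows "Itr (I0 Ipl Imi 1) (\<lambda>j. Ipl (j + 1) \<inter> I0 Ipl Imi 1) (\<lambda>j. Imi (j + 1) \<inter> I0 Ipl Imi 1) (n - 1)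
           = (\<Inter>i\<in>{1..n}. I0 Ipl Imi i)"
  using INT_shift_first[of "I0 Ipl Imi" "n - 1"] assms unfolding Itr_def I0_face by simp

lemma comm_span_loc_right_unital_ideal:
  assumes "module sc" and T: "ideal2 sc A T" and unital: "loc_right_unital T"
  shows "comm_span sc T A = comm_span sc T T"
proof -
  interpret module sc by (rule assms(1))
  have TA: "T \<subseteq> A" using T unfolding ideal2_def by auto
  have comm: "t * a - a * t \<in> comm_span sc T T" if t: "t \<in> T" and a: "a \<in> A" for t a
  proof -
    obtain f where f: "f \<in> T" "t * f = t" using loc_right_unitalE[OF unital t] .
    have "f * a \<in> T" "a * t \<in> T" using T f t a TA unfolding ideal2_def by blast+
    then have "t * (f * a) - (f * a) * t \<in> comm_span sc T T"
      and "(a * t) * f - f * (a * t) \<in> comm_span sc T T"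
      using t f unfolding comm_span_def by (blast intro: span_base)+
    then have "(t * (f * a) - (f * a) * t) - ((a * t) * f - f * (a * t)) \<in> comm_span sc T T"
      unfolding comm_span_def by (rule span_diff)
    moreover have "t * (f * a) = t * a" "(a * t) * f = a * t"
      using f by (metis mult.assoc)+
    then have "(t * (f * a) - (f * a) * t) - ((a * t) * f - f * (a * t)) = t * a - a * t"
      by (simp add: mult.assoc)
    ultimately show ?thesis by simp
  qed
  show ?thesis
  proof
    show "comm_span sc T A \<subseteq> comm_span sc T T"
      unfolding comm_span_def[of sc T A]
      by (rule span_minimal) (use comm in \<open>auto simp: comm_span_def\<close>)
    show "comm_span sc T T \<subseteq> comm_span sc T A"
      unfolding comm_span_def using TA by (intro span_mono) blast
  qed
qed

lemma nat_map_coset: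
  assumes "module sc" "module.subspace sc N" "C \<in> quot X N"
  shows "nat_map N C = C"
proof -
  obtain x where C: "C = {x + m | m. m \<in> N}" using assms(3) unfolding quot_def by auto
  have "0 \<in> N" "\<And>m m'. m \<in> N \<Longrightarrow> m' \<in> N \<Longrightarrow> m + m' \<in> N"
    using assms(1,2) by (auto intro: module.subspace_0 module.subspace_add)
  then show ?thesis unfolding nat_map_def setsum_def C
    by (auto simp: add.assoc) (metis add.right_neutral)
qed

lemma bij_betw_nat_map_same:
  assumes "module sc" "module.subspace sc N"
  shows "bij_betw (nat_map N) (quot X N) (quot X N)"
  by (rule bij_betw_cong[THEN iffD2, OF _ bij_betw_id]) (simp add: nat_map_coset[OF assms])

theorem mainTheorem9:
  fixes sc :: "'k::field \<Rightarrow> 'a::ring \<Rightarrow> 'a"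
    and A :: "'a set" and Ipl Imi :: "nat \<Rightarrow> 'a set" and n :: nat
  assumes alg: "kalg sc"
    and n1: "n \<ge> 1"
    and good: "good_cubical sc A Ipl Imi n"
  defines "A' \<equiv> I0 Ipl Imi 1"
    and "Jp \<equiv> (\<lambda>j. Ipl (j + 1) \<inter> I0 Ipl Imi 1)"
    and "Jm \<equiv> (\<lambda>j. Imi (j + 1) \<inter> I0 Ipl Imi 1)"
  shows "good_cubical sc A' Jp Jm (n - 1)
       \<and> Itr A' Jp Jm (n - 1) = Itr A Ipl Imi n
       \<and> bij_betw (nat_map (comm_span sc (Itr A Ipl Imi n) A))
            (quot (Itr A Ipl Imi n) (comm_span sc (Itr A Ipl Imi n) (Itr A Ipl Imi n)))
            (quot (Itr A Ipl Imi n) (comm_span sc (Itr A Ipl Imi n) A))"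
proof -
  have mod: "module sc" using alg by (simp add: kalg_def)
  have cub: "cubical sc A Ipl Imi n"
    and unital: "loc_biunital (\<Inter>i\<in>{1..n}. I0 Ipl Imi i)"
    using good n1 unfolding good_cubical_def by auto
  have ideals: "\<And>i. i \<in> {1..n} \<Longrightarrow> ideal2 sc A (I0 Ipl Imi i)"
    using cubical_I0[OF mod cub] .
  have "I0 Ipl Imi 1 \<subseteq> A" using ideals[of 1] n1 by (simp add: ideal2_def)
  then have Itr: "Itr A Ipl Imi n = (\<Inter>i\<in>{1..n}. I0 Ipl Imi i)"
    by (rule Itr_eq_INT[OF n1])
  have "ideal2 sc A (Itr A Ipl Imi n)"
    unfolding Itr using n1 by (intro ideal2_INT[OF mod] ideals) auto
  then have "comm_span sc (Itr A Ipl Imi n) A = comm_span sc (Itr A Ipl Imi n) (Itr A Ipl Imi n)"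
    using unital Itr by (intro comm_span_loc_right_unital_ideal[OF mod]) (simp_all add: loc_biunital_def)
  moreover have "module.subspace sc (comm_span sc X Y)" for X Y
    using mod by (simp add: comm_span_def module.subspace_span)
  ultimately show ?thesis
    unfolding A'_def Jp_def Jm_def Itr_face[OF n1] Itr[symmetric]
    using good_cubical_face[OF mod n1 good] bij_betw_nat_map_same[OF mod] by simp
qed

end
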